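(* For every quasiterm $X$ with $\mathrm{qGood}\;X$ and every varsort $xs$, the set $\{x : \mathrm{var} \mid \mathrm{qFresh}\;xs\;x\;X\}$ has cardinality $|\mathrm{var}|$.
   Context: Fix types $\mathrm{var}$ (variables), $\mathrm{varsort}$ (sorts of variables), $\mathrm{index}$, $\mathrm{bindex}$ (indexes of free and bound arguments) and $\mathrm{opsym}$ (operation symbols). For types $\alpha,\beta$, $(\alpha,\beta)\,\mathrm{input}$ is the type of partial functions $\alpha\to\beta\;\mathrm{option}$ (values $\mathrm{None}$ or $\mathrm{Some}\;b$); $\mathrm{dom}\,f=\{i\mid f\,i\neq\mathrm{None}\}$. For a predicate $P$ on $\beta$, $\uparrow P\;inp$ holds iff $P\,b$ for all $i$ with $inp\;i=\mathrm{Some}\;b$. Quasiterms and quasiabstractions are the mutually recursive free datatypes $\mathrm{qterm} = \mathrm{qVar}\;\mathrm{varsort}\;\mathrm{var} \mid \mathrm{qOp}\;\mathrm{opsym}\;((\mathrm{index},\mathrm{qterm})\,\mathrm{input})\;((\mathrm{bindex},\mathrm{qabs})\,\mathrm{input})$ and $\mathrm{qabs} = \mathrm{qAbs}\;\mathrm{varsort}\;\mathrm{var}\;\mathrm{qterm}$, where in $\mathrm{qAbs}\;xs\;x\;X$ the variable $x$ of varsort $xs$ is bound in $X$. $\mathrm{qFresh}\;xs\;x\;X$ means that the variable $x$ of varsort $xs$ has no free occurrence in $X$ (i.e. $\mathrm{qFresh}\;xs\;x\;(\mathrm{qVar}\;ys\;y)\iff (xs,x)\neq(ys,y)$; $\mathrm{qFresh}$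 holds for $\mathrm{qOp}\;\delta\;inp\;binp$ iff it holds for all components of $inp$ and $binp$; and it holds for $\mathrm{qAbs}\;ys\;y\;X$ iff $(xs,x)=(ys,y)$ or it holds for $X$). Goodness is defined mutually recursively: $\mathrm{qGood}(\mathrm{qVar}\;xs\;x)$ always; $\mathrm{qGood}(\mathrm{qOp}\;\delta\;inp\;binp)\iff \uparrow\mathrm{qGood}\;inp\wedge\uparrow\mathrm{qGoodAbs}\;binp\wedge|\mathrm{dom}\;inp|<|\mathrm{var}|\wedge|\mathrm{dom}\;binp|<|\mathrm{var}|$; $\mathrm{qGoodAbs}(\mathrm{qAbs}\;xs\;x\;X)\iff\mathrm{qGood}\;X$. Standing assumption: $|\mathrm{var}|$ is an infinite regular cardinal. *)

theory Defs
  imports Main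
begin

type_synonym ('a, 'b) input = "'a \<Rightarrow> 'b option"

definition liftAll :: "('b \<Rightarrow> bool) \<Rightarrow> ('a, 'b) input \<Rightarrow> bool" where
  "liftAll P inp \<longleftrightarrow> (\<forall>i b. inp i = Some b \<longrightarrow> P b)"

datatype ('index, 'bindex, 'varsort, 'var, 'opsym) qTerm =
    qVar 'varsort 'var
  | qOp 'opsym "('index, ('index, 'bindex, 'varsort, 'var, 'opsym) qTerm) input"
               "('bindex, ('index, 'bindex, 'varsort, 'var, 'opsym) qAbs) input"
and ('index, 'bindex, 'varsort, 'var, 'opsym) qAbs =
    qAbs 'varsort 'var "('index, 'bindex, 'varsort, 'var, 'opsym) qTerm"

primrec qFresh :: "'varsort \<Rightarrow> 'var \<Rightarrow> ('index, 'bindex, 'varsort, 'var, 'opsym) qTerm \<Rightarrow> bool"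
and qFreshAbs :: "'varsort \<Rightarrow> 'var \<Rightarrow> ('index, 'bindex, 'varsort, 'var, 'opsym) qAbs \<Rightarrow> bool"
where
  "qFresh xs x (qVar ys y) \<longleftrightarrow> (xs, x) \<noteq> (ys, y)"
| "qFresh xs x (qOp delta inp binp) \<longleftrightarrow>
     liftAll id (map_option (qFresh xs x) \<circ> inp) \<and> liftAll id (map_option (qFreshAbs xs x) \<circ> binp)"
| "qFreshAbs xs x (qAbs ys y X) \<longleftrightarrow> (xs, x) = (ys, y) \<or> qFresh xs x X"

primrec qGood :: "('index, 'bindex, 'varsort, 'var, 'opsym) qTerm \<Rightarrow> bool"
and qGoodAbs :: "('index, 'bindex, 'varsort, 'var, 'opsym) qAbs \<Rightarrow> bool"
where
  "qGood (qVar xs x) \<longleftrightarrow> True"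
| "qGood (qOp delta inp binp) \<longleftrightarrow>
     liftAll id (map_option qGood \<circ> inp) \<and> liftAll id (map_option qGoodAbs \<circ> binp) \<and>
     ordLess2 (card_of (dom inp)) (card_of (UNIV :: 'var set)) \<and>
     ordLess2 (card_of (dom binp)) (card_of (UNIV :: 'var set))"
| "qGoodAbs (qAbs xs x X) \<longleftrightarrow> qGood X"

lemma qFresh_qOp_liftAll:
  "qFresh xs x (qOp delta inp binp) \<longleftrightarrow> liftAll (qFresh xs x) inp \<and> liftAll (qFreshAbs xs x) binp"
  by (auto simp: liftAll_def) blast+

lemma qGood_qOp_liftAll:
  "qGood (qOp delta inp binp) \<longleftrightarrow> liftAll qGood inp \<and> liftAll qGoodAbs binp \<and>
     ordLess2 (card_of (dom inp)) (card_of (UNIV :: 'var set)) \<and>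
     ordLess2 (card_of (dom binp)) (card_of (UNIV :: 'var set))"
  for binp :: "('bindex, ('index, 'bindex, 'varsort, 'var, 'opsym) qAbs) input"
  by (auto simp: liftAll_def) blast+

end

theory Submission
  imports Defs
begin

text \<open>A good quasiterm has fewer than \<open>|var|\<close> non-fresh variables: a variable contributes one,
  an operation a union, indexed by its fewer than \<open>|var|\<close> arguments, of sets that are small by
  induction, which stays small because \<open>|var|\<close> is regular. The fresh variables form the
  complement of a small set in the infinite type \<open>var\<close>, hence have its full cardinality.\<close>

unbundle cardinal_syntax

lemma card_of_Diff_ordLess_infinite:
  fixes B :: "'a set"
  assumes "infinite (UNIV :: 'a set)" and small: "|B| <o |UNIV :: 'a set|"
  shows "|UNIV - B| =o |UNIV :: 'a set|"
proof -
  have "\<not> |UNIV - B| <o |UNIV :: 'a set|"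
  proof
    assume "|UNIV - B| <o |UNIV :: 'a set|"
    then have "|(UNIV - B) \<union> B| <o |UNIV :: 'a set|"
      using small card_of_Un_ordLess_infinite[OF assms(1)] by blast
    moreover have "(UNIV - B) \<union> B = UNIV" by blast
    ultimately show False using ordLess_irreflexive by metis
  qed
  moreover have "|UNIV - B| \<le>o |UNIV :: 'a set|" by (rule card_of_mono1) simp
  ultimately show ?thesis using ordLeq_iff_ordLess_or_ordIso by blast
qed

lemma card_of_UNION_input_ordLess:
  fixes inp :: "('i, 'b) input" and S :: "'b \<Rightarrow> 'a set"
  assumes "infinite (UNIV :: 'a set)" and "regularCard |UNIV :: 'a set|"
    and "|dom inp| <o |UNIV :: 'a set|"
    and "\<And>i b. inp i = Some b \<Longrightarrow> |S b| <o |UNIV :: 'a set|"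
  shows "|\<Union>i \<in> dom inp. S (the (inp i))| <o |UNIV :: 'a set|"
proof (rule card_of_UNION_ordLess_infinite_Field_regularCard)
  show "Cinfinite |UNIV :: 'a set|"
    using assms(1) by (simp add: cinfinite_def card_of_card_order_on Field_card_of)
qed (use assms in auto)

lemma qFresh_qOp_nonfresh_eq:
  "{x. \<not> qFresh xs x (qOp delta inp binp)} =
     (\<Union>i \<in> dom inp. {x. \<not> qFresh xs x (the (inp i))}) \<union>
     (\<Union>i \<in> dom binp. {x. \<not> qFreshAbs xs x (the (binp i))})"
  unfolding qFresh_qOp_liftAll liftAll_def dom_def by force

lemma qGood_nonfresh_ordLess:
  fixes X :: "('index, 'bindex, 'varsort, 'var, 'opsym) qTerm"
    and A :: "('index, 'bindex, 'varsort, 'var, 'opsym) qAbs"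
  assumes inf: "infinite (UNIV :: 'var set)"
    and reg: "regularCard |UNIV :: 'var set|"
  shows "qGood X \<Longrightarrow> |{x. \<not> qFresh xs x X}| <o |UNIV :: 'var set|"
    and "qGoodAbs A \<Longrightarrow> |{x. \<not> qFreshAbs xs x A}| <o |UNIV :: 'var set|"
proof (induction X and A)
  case (qVar ys y)
  have "finite {x. \<not> qFresh xs x (qVar ys y :: ('index, 'bindex, 'varsort, 'var, 'opsym) qTerm)}"
    by (rule finite_subset[of _ "{y}"]) auto
  then show ?case
    using inf finite_ordLess_infinite[OF card_of_Well_order card_of_Well_order, unfolded Field_card_of]
    by blast
next
  case (qOp delta inp binp)
  have "|\<Union>i \<in> dom inp. {x. \<not> qFresh xs x (the (inp i))}| <o |UNIV :: 'var set|"
  proof (rule card_of_UNION_input_ordLess[OF inf reg])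
    show "|dom inp| <o |UNIV :: 'var set|" using qOp.prems by simp
    fix i X assume "inp i = Some X"
    moreover from this have "qGood X"
      using qOp.prems unfolding qGood_qOp_liftAll liftAll_def by blast
    ultimately show "|{x. \<not> qFresh xs x X}| <o |UNIV :: 'var set|"
      using qOp.IH(1) by (metis option.set_intros rangeI)
  qed
  moreover have "|\<Union>i \<in> dom binp. {x. \<not> qFreshAbs xs x (the (binp i))}| <o |UNIV :: 'var set|"
  proof (rule card_of_UNION_input_ordLess[OF inf reg])
    show "|dom binp| <o |UNIV :: 'var set|" using qOp.prems by simp
    fix i A assume "binp i = Some A"
    moreover from this have "qGoodAbs A"
      using qOp.prems unfolding qGood_qOp_liftAll liftAll_def by blast
    ultimately show "|{x. \<not> qFreshAbs xs x A}| <o |UNIV :: 'var set|"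
      using qOp.IH(2) by (metis option.set_intros rangeI)
  qed
  ultimately show ?case
    unfolding qFresh_qOp_nonfresh_eq using card_of_Un_ordLess_infinite[OF inf] by blast
next
  case (qAbs ys y X)
  have "{x. \<not> qFreshAbs xs x (qAbs ys y X)} \<subseteq> {x. \<not> qFresh xs x X}" by auto
  then show ?case
    using qAbs ordLeq_ordLess_trans[OF card_of_mono1] by fastforce
qed

theorem proposition1:
  fixes X :: "('index, 'bindex, 'varsort, 'var, 'opsym) qTerm" and xs :: 'varsort
  assumes var_infinite: "infinite (UNIV :: 'var set)"
    and var_regular: "regularCard (card_of (UNIV :: 'var set))"
    and good: "qGood X"
  shows "ordIso2 (card_of {x :: 'var. qFresh xs x X}) (card_of (UNIV :: 'var set))"
proof -
  have "{x. qFresh xs x X} = UNIV - {x. \<not> qFresh xs x X}" by auto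
  moreover have "|{x. \<not> qFresh xs x X}| <o |UNIV :: 'var set|"
    using qGood_nonfresh_ordLess(1)[OF var_infinite var_regular good] .
  ultimately show ?thesis
    using card_of_Diff_ordLess_infinite[OF var_infinite] by simp
qed

end
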